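(* Let $G$ be a finite simple $d$-regular graph on $2n$ vertices ($d\ge 1$) that contains at least one perfect matching. Choose edges of $G$ one at a time in a uniformly random order (without repetition), stopping as soon as every vertex has degree at least one; call the resulting random graph $G_\omega$. Then $$\mathbb{E}\left(\frac{\#\{\text{perfect matchings of } G \text{ contained in } G_\omega\}}{\#\{\text{perfect matchings of } G\}}\right) = \frac{2}{\binom{n+d-1}{n}} - \frac{1}{\binom{n+2d-2}{n}}.$$
   Context: Precisely: a uniformly random ordering $(e_1,\dots,e_m)$ of the $m$ edges of $G$ is chosen, $k$ is the least index such that the graph on $V(G)$ with edges $e_1,\dots,e_k$ has no isolated vertex, and $G_\omega$ is that graph. A perfect matching is a set of edges such that every vertex lies in exactly one of them. *)

theory Defs
  imports "HOL-Probability.Probability"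
begin

definition simple_graph :: "'a set \<Rightarrow> 'a set set \<Rightarrow> bool" where
  "simple_graph V E \<longleftrightarrow> finite V \<and> (\<forall>e\<in>E. e \<subseteq> V \<and> card e = 2)"

definition degree :: "'a set set \<Rightarrow> 'a \<Rightarrow> nat" where
  "degree E v = card {e\<in>E. v \<in> e}"

definition regular :: "'a set \<Rightarrow> 'a set set \<Rightarrow> nat \<Rightarrow> bool" where
  "regular V E d \<longleftrightarrow> (\<forall>v\<in>V. degree E v = d)"

definition perfect_matching :: "'a set \<Rightarrow> 'a set set \<Rightarrow> 'a set set \<Rightarrow> bool" where
  "perfect_matching V E M \<longleftrightarrow> M \<subseteq> E \<and> (\<forall>v\<in>V. \<exists>!e. e \<in> M \<and> v \<in> e)"

definition perfect_matchings :: "'a set \<Rightarrow> 'a set set \<Rightarrow> 'a set set set" where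
  "perfect_matchings V E = {M. perfect_matching V E M}"

definition edge_orderings :: "'a set set \<Rightarrow> 'a set list set" where
  "edge_orderings E = {es. distinct es \<and> set es = E}"

definition no_isolated :: "'a set \<Rightarrow> 'a set set \<Rightarrow> bool" where
  "no_isolated V F \<longleftrightarrow> (\<forall>v\<in>V. \<exists>e\<in>F. v \<in> e)"

definition stop_index :: "'a set \<Rightarrow> 'a set list \<Rightarrow> nat" where
  "stop_index V es = (LEAST k. no_isolated V (set (take k es)))"

definition G_omega :: "'a set \<Rightarrow> 'a set list \<Rightarrow> 'a set set" where
  "G_omega V es = set (take (stop_index V es) es)"

end

(*
  Fix a perfect matching M. The process stops when the last isolated vertex receives its
  first edge, so M is contained in G_omega iff some edge e of M, with an endpoint u, comes
  after all other edges of M and before all other edges at u: then u is isolated until e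
  arrives, and conversely the edge that stops the process is the M-edge of the vertex it
  covers. Different e give disjoint events, because e is the last edge of M.

  In a uniformly random ordering, e follows a set P and precedes a disjoint set Q with
  probability |P|! |Q|! / (|P| + |Q| + 1)!, which for |P| = n - 1 is
  1 / (n * binom(n + |Q|, n)). Here |Q| = d - 1 for one endpoint and 2d - 2 for both, so
  inclusion-exclusion over the two endpoints and summation over the n edges of M give
  probability 2 / binom(n + d - 1, n) - 1 / binom(n + 2d - 2, n) for every M; the
  expectation in the theorem is the average of these probabilities.
*)

theory Submission
  imports Defs "HOL-Combinatorics.Multiset_Permutations"
begin

lemma card_eq_sum_card_Cons_vimage:
  assumes "finite L" "finite A" "\<And>xs. xs \<in> L \<Longrightarrow> xs \<noteq> [] \<and> hd xs \<in> A"
  shows "card L = (\<Sum>x\<in>A. card (Cons x -` L))"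
proof -
  have "L = (\<Union>x\<in>A. Cons x ` (Cons x -` L))"
  proof
    show "L \<subseteq> (\<Union>x\<in>A. Cons x ` (Cons x -` L))"
    proof
      fix xs assume "xs \<in> L"
      then obtain y ys where "xs = y # ys" "y \<in> A"
        using assms(3)[OF \<open>xs \<in> L\<close>] by (cases xs) auto
      with \<open>xs \<in> L\<close> show "xs \<in> (\<Union>x\<in>A. Cons x ` (Cons x -` L))"
        by blast
    qed
  qed blast
  also have "card \<dots> = (\<Sum>x\<in>A. card (Cons x ` (Cons x -` L)))"
    using assms(1,2) by (intro card_UN_disjoint) (auto intro: finite_vimageI)
  also have "\<dots> = (\<Sum>x\<in>A. card (Cons x -` L))"
    by (intro sum.cong refl card_image) simp
  finally show ?thesis .
qed

lemma Cons_eq_append_Cons_iff: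
  "x \<noteq> e \<Longrightarrow> x # xs = as @ e # bs \<longleftrightarrow> (\<exists>as'. as = x # as' \<and> xs = as' @ e # bs)"
  by (auto simp: Cons_eq_append_conv)

definition separating_orderings :: "'a set \<Rightarrow> 'a set \<Rightarrow> 'a \<Rightarrow> 'a set \<Rightarrow> 'a list set" where
  "separating_orderings E P e Q =
     {es \<in> permutations_of_set E. \<exists>xs ys. es = xs @ e # ys \<and> P \<subseteq> set xs \<and> Q \<subseteq> set ys}"

lemma finite_separating_orderings: "finite E \<Longrightarrow> finite (separating_orderings E P e Q)"
  unfolding separating_orderings_def by simp

lemma separating_orderings_Cons_vimage_empty:
  assumes "x \<in> Q" "e \<notin> Q"
  shows "Cons x -` separating_orderings E P e Q = {}"
proof -
  have "x \<noteq> e" using assms by blast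
  have False if "distinct (x # xs)" "x # xs = as @ e # bs" "Q \<subseteq> set bs" for xs as bs
    using that assms(1) by (auto simp: Cons_eq_append_Cons_iff[OF \<open>x \<noteq> e\<close>])
  then show ?thesis
    by (fastforce simp: separating_orderings_def permutations_of_set_def)
qed

lemma separating_orderings_Cons_vimage_separator:
  assumes "e \<in> E" "Q \<subseteq> E" "e \<notin> Q"
  shows "Cons e -` separating_orderings E P e Q =
    (if P = {} then permutations_of_set (E - {e}) else {})"
proof -
  have split_iff: "e # xs = as @ e # bs \<longleftrightarrow> as = [] \<and> bs = xs" if "e \<notin> set xs" for xs as bs
    using that by (auto simp: Cons_eq_append_conv)
  have "e # xs \<in> separating_orderings E P e Q \<longleftrightarrow>
        xs \<in> permutations_of_set (E - {e}) \<and> P = {}" for xs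
  proof (cases "e \<in> set xs")
    case False
    have "e # xs \<in> permutations_of_set E \<longleftrightarrow> xs \<in> permutations_of_set (E - {e})"
      using False assms by (auto simp: permutations_of_set_def)
    moreover have "xs \<in> permutations_of_set (E - {e}) \<Longrightarrow> Q \<subseteq> set xs"
      using assms by (auto simp: permutations_of_set_def)
    ultimately show ?thesis
      unfolding separating_orderings_def mem_Collect_eq split_iff[OF False] by auto
  qed (auto simp: separating_orderings_def permutations_of_set_def)
  then show ?thesis
    by auto
qed

lemma separating_orderings_Cons_vimage_other:
  assumes "x \<in> E" "x \<noteq> e" "x \<notin> Q"
  shows "Cons x -` separating_orderings E P e Q = separating_orderings (E - {x}) (P - {x}) e Q"
proof -
  have split_iff: "(\<exists>as bs. x # xs = as @ e # bs \<and> P \<subseteq> set as \<and> Q \<subseteq> set bs) \<longleftrightarrow>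
        (\<exists>as bs. xs = as @ e # bs \<and> P - {x} \<subseteq> set as \<and> Q \<subseteq> set bs)" (is "?L \<longleftrightarrow> ?R") for xs
  proof
    assume ?L
    then obtain as bs where "xs = as @ e # bs" "P \<subseteq> set (x # as)" "Q \<subseteq> set bs"
      unfolding Cons_eq_append_Cons_iff[OF assms(2)] by blast
    then show ?R
      by auto
  next
    assume ?R
    then obtain as bs where "xs = as @ e # bs" "P - {x} \<subseteq> set as" "Q \<subseteq> set bs"
      by blast
    then show ?L
      by (intro exI[of _ "x # as"] exI[of _ bs]) auto
  qed
  have perm_iff: "x # xs \<in> permutations_of_set E \<longleftrightarrow> xs \<in> permutations_of_set (E - {x})" for xs
    using assms(1) by (auto simp: permutations_of_set_def)
  show ?thesis
    unfolding separating_orderings_def vimage_def mem_Collect_eq split_iff perm_iff ..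
qed

lemma separation_count_recurrence:
  fixes p q r :: nat
  shows "(if p = 0 then fact (p + q + r) else 0)
         + p * (fact (p + q + r) * fact (p - 1) * fact q / fact (p - 1 + q + 1))
         + r * (fact (p + q + r) * fact p * fact q / fact (p + q + 1))
         = (fact (p + q + r + 1) * fact p * fact q / fact (p + q + 1) :: real)"
proof (cases p)
  case 0
  have "fact (q + r + 1) = (real q + 1 + r) * fact (q + r)"
    by (simp add: algebra_simps)
  moreover have "fact (q + 1) = fact q * (real q + 1)"
    by simp
  ultimately show ?thesis
    unfolding 0 by (simp add: divide_simps) (simp add: algebra_simps)
next
  case (Suc k)
  have "fact (p + q + r + 1) = (real p + q + 1 + r) * fact (p + q + r)"
    by (simp add: algebra_simps)
  moreover have "fact (p + q + 1) = (real p + q + 1) * fact (k + q + 1)"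
    using Suc by (simp add: algebra_simps)
  moreover have "fact p = real p * fact k"
    using Suc by simp
  ultimately show ?thesis
    unfolding Suc by (simp add: divide_simps) (simp add: algebra_simps)
qed

lemma card_separating_orderings_first_edge:
  assumes "finite E" "e \<in> E" "P \<subseteq> E" "Q \<subseteq> E" "e \<notin> P" "e \<notin> Q" "P \<inter> Q = {}"
  shows "card (separating_orderings E P e Q) =
    (if P = {} then fact (card E - 1) else 0)
    + (\<Sum>x\<in>P. card (separating_orderings (E - {x}) (P - {x}) e Q))
    + (\<Sum>x\<in>E - insert e (P \<union> Q). card (separating_orderings (E - {x}) P e Q))"
proof -
  let ?S = "separating_orderings E P e Q"
  let ?c = "\<lambda>x. card (Cons x -` ?S)"
  define R where "R = E - insert e (P \<union> Q)"
  have "xs \<noteq> [] \<and> hd xs \<in> E" if "xs \<in> ?S" for xs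
    using that assms(2) by (cases xs) (auto simp: separating_orderings_def permutations_of_set_def)
  then have "card ?S = (\<Sum>x\<in>E. ?c x)"
    using assms(1) by (simp add: card_eq_sum_card_Cons_vimage finite_separating_orderings)
  also have "\<dots> = ?c e + ((\<Sum>x\<in>Q. ?c x) + ((\<Sum>x\<in>P. ?c x) + (\<Sum>x\<in>R. ?c x)))"
  proof -
    have "E = insert e (Q \<union> (P \<union> R))" "e \<notin> Q \<union> (P \<union> R)" "Q \<inter> (P \<union> R) = {}" "P \<inter> R = {}"
      using assms unfolding R_def by auto
    then show ?thesis
      using assms(1) by (simp add: sum.union_disjoint)
  qed
  also have "?c e = (if P = {} then fact (card E - 1) else 0)"
    using assms by (simp add: separating_orderings_Cons_vimage_separator card_Diff_singleton)
  also have "(\<Sum>x\<in>Q. ?c x) = 0"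
    using assms(6) by (simp add: separating_orderings_Cons_vimage_empty)
  also have "(\<Sum>x\<in>P. ?c x) = (\<Sum>x\<in>P. card (separating_orderings (E - {x}) (P - {x}) e Q))"
    using assms by (intro sum.cong refl arg_cong[where f = card] separating_orderings_Cons_vimage_other) auto
  also have "(\<Sum>x\<in>R. ?c x) = (\<Sum>x\<in>R. card (separating_orderings (E - {x}) P e Q))"
  proof (rule sum.cong[OF refl])
    fix x assume "x \<in> R"
    then have "x \<in> E" "x \<noteq> e" "x \<notin> Q" "P - {x} = P"
      unfolding R_def by auto
    then show "?c x = card (separating_orderings (E - {x}) P e Q)"
      by (simp add: separating_orderings_Cons_vimage_other)
  qed
  finally show ?thesis
    unfolding R_def by simp
qed

lemma card_separating_orderings:
  assumes "finite E" "e \<in> E" "P \<subseteq> E" "Q \<subseteq> E" "e \<notin> P" "e \<notin> Q" "P \<inter> Q = {}"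
  shows "real (card (separating_orderings E P e Q)) =
    fact (card E) * fact (card P) * fact (card Q) / fact (card P + card Q + 1)"
  using assms
proof (induction "card E" arbitrary: E P rule: less_induct)
  case less
  define R where "R = E - insert e (P \<union> Q)"
  define N where "N = card E - 1"
  have fin: "finite P" "finite Q"
    using finite_subset[OF less.prems(3,1)] finite_subset[OF less.prems(4,1)] .
  have "card (insert e (P \<union> Q)) = card P + card Q + 1"
    using fin less.prems by (simp add: card_Un_disjoint)
  then have card_E: "card E = card P + card Q + card R + 1"
    using card_Diff_subset[of "insert e (P \<union> Q)" E] card_mono[of E "insert e (P \<union> Q)"] less.prems
    unfolding R_def by (simp add: finite_subset)
  have IH_P: "real (card (separating_orderings (E - {x}) (P - {x}) e Q)) =
      fact N * fact (card P - 1) * fact (card Q) / fact (card P - 1 + card Q + 1)" if "x \<in> P" for x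
    using less.hyps[of "E - {x}" "P - {x}"] card_Diff1_less[OF less.prems(1) subsetD[OF less.prems(3) that]]
      subsetD[OF less.prems(3) that] less.prems that fin
    unfolding N_def by (auto simp: card_Diff_singleton)
  have IH_R: "real (card (separating_orderings (E - {x}) P e Q)) =
      fact N * fact (card P) * fact (card Q) / fact (card P + card Q + 1)" if "x \<in> R" for x
  proof -
    have "x \<in> E" "x \<noteq> e" "x \<notin> P" "x \<notin> Q"
      using that unfolding R_def by auto
    then show ?thesis
      using less.hyps[of "E - {x}" P] card_Diff1_less[OF less.prems(1) \<open>x \<in> E\<close>] less.prems
      unfolding N_def by (auto simp: card_Diff_singleton)
  qed
  have "real (card (separating_orderings E P e Q)) =
      (if P = {} then fact N else 0)
      + (\<Sum>x\<in>P. real (card (separating_orderings (E - {x}) (P - {x}) e Q)))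
      + (\<Sum>x\<in>R. real (card (separating_orderings (E - {x}) P e Q)))"
    using card_separating_orderings_first_edge[OF less.prems] unfolding R_def N_def by simp
  also have "(\<Sum>x\<in>P. real (card (separating_orderings (E - {x}) (P - {x}) e Q))) =
      card P * (fact N * fact (card P - 1) * fact (card Q) / fact (card P - 1 + card Q + 1))"
    using IH_P by simp
  also have "(\<Sum>x\<in>R. real (card (separating_orderings (E - {x}) P e Q))) =
      card R * (fact N * fact (card P) * fact (card Q) / fact (card P + card Q + 1))"
    using IH_R by simp
  also have "(if P = {} then fact N else 0) = (if card P = 0 then fact N else 0)"
    using fin by simp
  also have "\<dots> + card P * (fact N * fact (card P - 1) * fact (card Q) / fact (card P - 1 + card Q + 1))
      + card R * (fact N * fact (card P) * fact (card Q) / fact (card P + card Q + 1))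
      = fact (card E) * fact (card P) * fact (card Q) / fact (card P + card Q + 1)"
    unfolding N_def card_E by (simp only: diff_add_inverse2 separation_count_recurrence)
  finally show ?case .
qed

lemma separating_orderings_Int:
  "separating_orderings E P e Q \<inter> separating_orderings E P e Q' = separating_orderings E P e (Q \<union> Q')"
proof
  show "separating_orderings E P e Q \<inter> separating_orderings E P e Q' \<subseteq> separating_orderings E P e (Q \<union> Q')"
  proof
    fix es assume "es \<in> separating_orderings E P e Q \<inter> separating_orderings E P e Q'"
    then obtain xs ys xs' ys' where perm: "es \<in> permutations_of_set E"
      and split: "es = xs @ e # ys" "P \<subseteq> set xs" "Q \<subseteq> set ys"
      and split': "es = xs' @ e # ys'" "Q' \<subseteq> set ys'"
      unfolding separating_orderings_def by blast
    have "distinct (xs @ e # ys)"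
      using perm split(1) by (simp add: permutations_of_set_def)
    then have "ys = ys'"
      using split(1) split'(1) append_Cons_eq_iff[of e xs ys xs' ys'] by auto
    then show "es \<in> separating_orderings E P e (Q \<union> Q')"
      using perm split split' unfolding separating_orderings_def by blast
  qed
qed (auto simp: separating_orderings_def)

lemma separating_orderings_disjoint:
  assumes "e' \<in> P" "e \<in> P'"
  shows "separating_orderings E P e Q \<inter> separating_orderings E P' e' Q' = {}"
proof (rule ccontr)
  assume "separating_orderings E P e Q \<inter> separating_orderings E P' e' Q' \<noteq> {}"
  then obtain es xs ys xs' ys' where perm: "es \<in> permutations_of_set E"
    and split: "es = xs @ e # ys" "e' \<in> set xs" and split': "es = xs' @ e' # ys'" "e \<in> set xs'"
    using assms unfolding separating_orderings_def by blast
  obtain as bs where xs: "xs = as @ e' # bs"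
    using split(2) split_list by metis
  have dist: "distinct (as @ e' # bs @ e # ys)"
    using perm split(1) xs by (simp add: permutations_of_set_def)
  then have "xs' = as"
    using split(1) split'(1) xs append_Cons_eq_iff[of e' as "bs @ e # ys" xs' ys'] by auto
  then show False
    using dist split'(2) by auto
qed

definition incident_edges :: "'a set set \<Rightarrow> 'a \<Rightarrow> 'a set set" where
  "incident_edges E u = {g \<in> E. u \<in> g}"

lemma simple_graph_finite_edges: "simple_graph V E \<Longrightarrow> finite E"
  unfolding simple_graph_def by (auto intro: finite_subset[of E "Pow V"])

lemma perfect_matching_subset: "perfect_matching V E M \<Longrightarrow> M \<subseteq> E"
  by (simp add: perfect_matching_def)

lemma perfect_matching_unique_edge:
  assumes "perfect_matching V E M" "v \<in> V" "g \<in> M" "g' \<in> M" "v \<in> g" "v \<in> g'"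
  shows "g = g'"
  using assms unfolding perfect_matching_def by auto

lemma perfect_matching_subgraph_iff:
  "F \<subseteq> E \<Longrightarrow> perfect_matching V F M \<longleftrightarrow> perfect_matching V E M \<and> M \<subseteq> F"
  unfolding perfect_matching_def by blast

lemma finite_perfect_matchings: "finite E \<Longrightarrow> finite (perfect_matchings V E)"
  unfolding perfect_matchings_def
  by (rule finite_subset[of _ "Pow E"]) (auto dest: perfect_matching_subset)

lemma card_perfect_matching:
  assumes "simple_graph V E" and M: "perfect_matching V E M"
  shows "card V = 2 * card M"
proof -
  have edges: "g \<subseteq> V" "card g = 2" if "g \<in> M" for g
    using assms that unfolding simple_graph_def perfect_matching_def by auto
  have "V = \<Union>M"
    using edges M unfolding perfect_matching_def by blast
  also have "card (\<Union>M) = (\<Sum>g\<in>M. card g)"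
  proof (rule card_Union_disjoint)
    show "pairwise disjnt M"
      unfolding pairwise_def disjnt_def
      using edges perfect_matching_unique_edge[OF M] by blast
    show "finite g" if "g \<in> M" for g
      using edges(2)[OF that] by (simp add: card_ge_0_finite)
  qed
  also have "\<dots> = (\<Sum>g\<in>M. 2)"
    using edges by (intro sum.cong) auto
  finally show ?thesis
    by simp
qed

lemma card_incident_edges: "regular V E d \<Longrightarrow> w \<in> V \<Longrightarrow> card (incident_edges E w) = d"
  unfolding regular_def degree_def incident_edges_def by blast

lemma incident_edges_Int:
  assumes "simple_graph V E" "{u, v} \<in> E" "u \<noteq> v"
  shows "incident_edges E u \<inter> incident_edges E v = {{u, v}}"
proof (intro equalityI subsetI)
  fix g assume "g \<in> incident_edges E u \<inter> incident_edges E v"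
  then have "g \<in> E" "{u, v} \<subseteq> g"
    unfolding incident_edges_def by auto
  moreover from \<open>g \<in> E\<close> have "card g = 2"
    using assms(1) unfolding simple_graph_def by blast
  ultimately show "g \<in> {{u, v}}"
    using card_subset_eq[of g "{u, v}"] assms(3) by (simp add: card_ge_0_finite)
qed (use assms(2) in \<open>simp add: incident_edges_def\<close>)

lemma matching_Int_incident_edges:
  assumes "perfect_matching V E M" "e \<in> M" "w \<in> e" "w \<in> V"
  shows "(M - {e}) \<inter> incident_edges E w = {}"
  using perfect_matching_unique_edge[OF assms(1,4) _ assms(2) _ assms(3)]
  unfolding incident_edges_def by blast

lemma perfect_matching_no_isolated: "perfect_matching V E M \<Longrightarrow> no_isolated V E"
  unfolding perfect_matching_def no_isolated_def by blast

lemma G_omega_subset: "G_omega V es \<subseteq> set es"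
  unfolding G_omega_def by (rule set_take_subset)

lemma no_isolated_G_omega:
  "no_isolated V (set es) \<Longrightarrow> no_isolated V (G_omega V es)"
  unfolding G_omega_def stop_index_def by (rule LeastI[of _ "length es"]) simp

lemma isolated_before_stop_index:
  "k < stop_index V es \<Longrightarrow> \<not> no_isolated V (set (take k es))"
  unfolding stop_index_def by (rule not_less_Least)

lemma stop_index_greater:
  assumes "no_isolated V (set es)" "u \<in> V" "\<forall>g\<in>set (take k es). u \<notin> g"
  shows "k < stop_index V es"
proof (rule ccontr)
  assume "\<not> k < stop_index V es"
  then have "G_omega V es \<subseteq> set (take k es)"
    unfolding G_omega_def by (simp add: set_take_subset_set_take)
  then show False
    using no_isolated_G_omega[OF assms(1)] assms(2,3) unfolding no_isolated_def by blast
qed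

lemma G_omega_Suc_stop_index:
  assumes "no_isolated V (set es)" "stop_index V es = Suc j"
  obtains w where "j < length es" "G_omega V es = insert (es ! j) (set (take j es))"
    "w \<in> V" "\<forall>g\<in>set (take j es). w \<notin> g"
proof -
  have isolated: "\<not> no_isolated V (set (take j es))"
    using isolated_before_stop_index[of j V es] assms(2) by simp
  then have "j < length es"
    using assms(1) by (metis not_less take_all)
  moreover obtain w where "w \<in> V" "\<forall>g\<in>set (take j es). w \<notin> g"
    using isolated unfolding no_isolated_def by blast
  ultimately show ?thesis
    using that assms(2) by (simp add: G_omega_def take_Suc_conv_app_nth)
qed

lemma separating_edge_if_matching_in_G_omega:
  assumes es: "es \<in> permutations_of_set E" and M: "perfect_matching V E M" "M \<noteq> {}"
    and sub: "M \<subseteq> G_omega V es"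
  obtains e u where "e \<in> M" "u \<in> e"
    "es \<in> separating_orderings E (M - {e}) e (incident_edges E u - {e})"
proof -
  have set_es: "set es = E" "distinct es"
    using es by (auto simp: permutations_of_set_def)
  have no_iso: "no_isolated V (set es)"
    using perfect_matching_no_isolated[OF M(1)] set_es by simp
  have "stop_index V es \<noteq> 0"
    using sub M(2) by (auto simp: G_omega_def)
  then obtain j where j: "stop_index V es = Suc j"
    using not0_implies_Suc by blast
  obtain w where jlen: "j < length es" and G: "G_omega V es = insert (es ! j) (set (take j es))"
    and w: "w \<in> V" "\<forall>g\<in>set (take j es). w \<notin> g"
    using G_omega_Suc_stop_index[OF no_iso j] .
  obtain e where e: "e \<in> M" "w \<in> e"
    using M(1) w(1) unfolding perfect_matching_def by blast
  have "e = es ! j"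
    using e sub w(2) unfolding G by blast
  define xs ys where "xs = take j es" and "ys = drop (Suc j) es"
  have split: "es = xs @ e # ys"
    using jlen \<open>e = es ! j\<close> unfolding xs_def ys_def by (simp add: id_take_nth_drop)
  have "M - {e} \<subseteq> set xs"
    using sub unfolding G \<open>e = es ! j\<close> xs_def by blast
  moreover have "incident_edges E w - {e} \<subseteq> set ys"
    using set_es(1) w(2)[folded xs_def] unfolding split by (auto simp: incident_edges_def)
  ultimately have "es \<in> separating_orderings E (M - {e}) e (incident_edges E w - {e})"
    using es split unfolding separating_orderings_def by blast
  with e show ?thesis
    using that by blast
qed

lemma matching_in_G_omega_if_separating_edge:
  assumes E: "\<forall>g\<in>E. g \<subseteq> V" and M: "perfect_matching V E M" and e: "e \<in> M" "u \<in> e"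
    and es: "es \<in> separating_orderings E (M - {e}) e (incident_edges E u - {e})"
  shows "M \<subseteq> G_omega V es"
proof -
  obtain xs ys where split: "es = xs @ e # ys" and before: "M - {e} \<subseteq> set xs"
    and after: "incident_edges E u - {e} \<subseteq> set ys" and perm: "es \<in> permutations_of_set E"
    using es unfolding separating_orderings_def by blast
  have dist: "distinct (xs @ e # ys)" and set_es: "set es = E"
    using perm split by (auto simp: permutations_of_set_def)
  have "u \<in> V"
    using E M e unfolding perfect_matching_def by blast
  moreover have "\<forall>g\<in>set (take (length xs) es). u \<notin> g"
    using after dist set_es unfolding split by (auto simp: incident_edges_def)
  ultimately have "length xs < stop_index V es"
    using perfect_matching_no_isolated[OF M] set_es by (intro stop_index_greater) auto
  then have "set (take (Suc (length xs)) es) \<subseteq> G_omega V es"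
    unfolding G_omega_def by (simp add: set_take_subset_set_take)
  then show ?thesis
    using before unfolding split by auto
qed

lemma fact_div_fact_eq_inverse_binomial:
  assumes "0 < m"
  shows "fact (m - 1) * fact q / fact (m - 1 + q + 1) = 1 / (real m * real ((m + q) choose m))"
proof -
  have "m - 1 + q + 1 = m + q"
    using assms by simp
  moreover have "real ((m + q) choose m) = fact (m + q) / (fact m * fact q)"
    by (simp add: binomial_fact)
  moreover have "(fact m :: real) = real m * fact (m - 1)"
    using assms by (simp add: fact_reduce)
  ultimately show ?thesis
    by simp
qed

lemma card_separating_orderings_binomial:
  assumes "finite E" "M \<subseteq> E" "e \<in> M" "Q \<subseteq> E" "M \<inter> Q = {}"
  shows "real (card (separating_orderings E (M - {e}) e Q)) =
    fact (card E) / (card M * ((card M + card Q) choose card M))"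
proof -
  have "finite M" "0 < card M"
    using assms(1-3) finite_subset card_gt_0_iff by blast+
  have "real (card (separating_orderings E (M - {e}) e Q)) =
      fact (card E) * fact (card (M - {e})) * fact (card Q) / fact (card (M - {e}) + card Q + 1)"
    using assms by (intro card_separating_orderings) auto
  also have "\<dots> = fact (card E) * (fact (card M - 1) * fact (card Q) / fact (card M - 1 + card Q + 1))"
    using \<open>finite M\<close> assms(3) by (simp add: card_Diff_singleton)
  finally show ?thesis
    unfolding fact_div_fact_eq_inverse_binomial[OF \<open>0 < card M\<close>] by simp
qed

lemma card_incident_edges_Diff:
  "regular V E d \<Longrightarrow> e \<in> E \<Longrightarrow> w \<in> V \<Longrightarrow> w \<in> e \<Longrightarrow> card (incident_edges E w - {e}) = d - 1"
  using card_incident_edges[of V E d w] by (simp add: card_Diff_singleton incident_edges_def)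

lemma card_edges_adjacent_to_edge:
  assumes "simple_graph V E" "regular V E d" "{u, v} \<in> E" "u \<noteq> v"
  shows "card ((incident_edges E u - {{u, v}}) \<union> (incident_edges E v - {{u, v}})) = 2 * d - 2"
proof -
  have "u \<in> V" "v \<in> V"
    using assms(1,3) unfolding simple_graph_def by auto
  moreover have "finite (incident_edges E w)" for w
    using simple_graph_finite_edges[OF assms(1)] by (simp add: incident_edges_def)
  ultimately show ?thesis
    using incident_edges_Int[OF assms(1,3,4)] card_incident_edges_Diff[OF assms(2,3)]
    by (subst card_Un_disjoint) auto
qed

lemma card_separating_orderings_matching_edge:
  assumes G: "simple_graph V E" "regular V E d" "1 \<le> d" and M: "perfect_matching V E M" "e \<in> M"
  shows "real (card (\<Union>u\<in>e. separating_orderings E (M - {e}) e (incident_edges E u - {e}))) =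
    fact (card E) * (2 / (card M * ((card M + d - 1) choose card M))
                     - 1 / (card M * ((card M + 2 * d - 2) choose card M)))"
proof -
  let ?S = "\<lambda>Q. separating_orderings E (M - {e}) e Q"
  let ?Q = "\<lambda>w. incident_edges E w - {e}"
  have "M \<subseteq> E" "finite E"
    using perfect_matching_subset[OF M(1)] simple_graph_finite_edges[OF G(1)] .
  then have "e \<in> E" "e \<subseteq> V" "card e = 2"
    using G(1) M(2) unfolding simple_graph_def by auto
  then obtain u v where e: "e = {u, v}" "u \<noteq> v" "u \<in> V" "v \<in> V"
    by (auto simp: card_2_iff)
  have count: "real (card (?S Q)) = fact (card E) / (card M * ((card M + card Q) choose card M))"
    if "Q \<subseteq> ?Q u \<union> ?Q v" for Q
  proof (rule card_separating_orderings_binomial)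
    show "Q \<subseteq> E"
      using that unfolding incident_edges_def by auto
    show "M \<inter> Q = {}"
      using that matching_Int_incident_edges[OF M, of u] matching_Int_incident_edges[OF M, of v] e
      by blast
  qed (use \<open>finite E\<close> \<open>M \<subseteq> E\<close> M(2) in auto)
  have one: "real (card (?S (?Q w))) = fact (card E) / (card M * ((card M + d - 1) choose card M))"
    if "w \<in> e" for w
  proof -
    have "w \<in> V" "?Q w \<subseteq> ?Q u \<union> ?Q v"
      using that e by auto
    then show ?thesis
      using count[of "?Q w"] card_incident_edges_Diff[OF G(2) \<open>e \<in> E\<close> _ that] G(3) by simp
  qed
  have both: "real (card (?S (?Q u) \<inter> ?S (?Q v))) =
      fact (card E) / (card M * ((card M + 2 * d - 2) choose card M))"
    unfolding separating_orderings_Int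
    using count[of "?Q u \<union> ?Q v"] card_edges_adjacent_to_edge[OF G(1,2)] \<open>e \<in> E\<close> e G(3) by simp
  have fin_S: "finite (?S Q)" for Q
    using finite_separating_orderings \<open>finite E\<close> .
  have "real (card (?S (?Q u))) + real (card (?S (?Q v))) =
      real (card (?S (?Q u) \<union> ?S (?Q v))) + real (card (?S (?Q u) \<inter> ?S (?Q v)))"
    unfolding of_nat_add[symmetric] by (rule arg_cong[OF card_Un_Int[OF fin_S fin_S]])
  moreover have "(\<Union>w\<in>e. ?S (?Q w)) = ?S (?Q u) \<union> ?S (?Q v)"
    using e by simp
  ultimately have "real (card (\<Union>w\<in>e. ?S (?Q w))) =
      2 * (fact (card E) / (card M * ((card M + d - 1) choose card M)))
      - fact (card E) / (card M * ((card M + 2 * d - 2) choose card M))"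
    using one[of u] one[of v] both e(1) by simp
  then show ?thesis
    by (simp add: right_diff_distrib)
qed

lemma orderings_with_matching_in_G_omega:
  assumes "\<forall>g\<in>E. g \<subseteq> V" "perfect_matching V E M" "M \<noteq> {}"
  shows "{es \<in> permutations_of_set E. M \<subseteq> G_omega V es} =
    (\<Union>e\<in>M. \<Union>u\<in>e. separating_orderings E (M - {e}) e (incident_edges E u - {e}))"
    (is "_ = (\<Union>e\<in>M. \<Union>u\<in>e. ?S e u)")
proof (intro equalityI subsetI)
  fix es assume "es \<in> {es \<in> permutations_of_set E. M \<subseteq> G_omega V es}"
  then obtain e u where "e \<in> M" "u \<in> e" "es \<in> ?S e u"
    using separating_edge_if_matching_in_G_omega[OF _ assms(2,3)] by blast
  then show "es \<in> (\<Union>e\<in>M. \<Union>u\<in>e. ?S e u)"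
    by blast
next
  fix es assume "es \<in> (\<Union>e\<in>M. \<Union>u\<in>e. ?S e u)"
  then obtain e u where "e \<in> M" "u \<in> e" "es \<in> ?S e u"
    by blast
  moreover from this have "es \<in> permutations_of_set E"
    unfolding separating_orderings_def by blast
  ultimately show "es \<in> {es \<in> permutations_of_set E. M \<subseteq> G_omega V es}"
    using matching_in_G_omega_if_separating_edge[OF assms(1,2)] by blast
qed

lemma card_orderings_with_matching_in_G_omega:
  assumes G: "simple_graph V E" "card V = 2 * n" "1 \<le> d" "regular V E d"
    and M: "perfect_matching V E M"
  shows "real (card {es \<in> permutations_of_set E. M \<subseteq> G_omega V es}) =
    fact (card E) * (2 / ((n + d - 1) choose n) - 1 / ((n + 2 * d - 2) choose n))"
proof (cases "M = {}")
  case True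
  then have "n = 0"
    using card_perfect_matching[OF G(1) M] G(2) by simp
  with True show ?thesis
    using simple_graph_finite_edges[OF G(1)] by simp
next
  case False
  let ?S = "\<lambda>e u. separating_orderings E (M - {e}) e (incident_edges E u - {e})"
  have "card M = n"
    using card_perfect_matching[OF G(1) M] G(2) by simp
  have "M \<subseteq> E" "finite E"
    using perfect_matching_subset[OF M] simple_graph_finite_edges[OF G(1)] .
  then have "finite M" "0 < n"
    using \<open>card M = n\<close> False by (auto simp: card_gt_0_iff dest: finite_subset)
  have edges: "g \<subseteq> V" "finite g" if "g \<in> E" for g
    using G(1) that unfolding simple_graph_def by (auto simp: card_ge_0_finite)
  have "card (\<Union>e\<in>M. \<Union>u\<in>e. ?S e u) = (\<Sum>e\<in>M. card (\<Union>u\<in>e. ?S e u))"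
  proof (rule card_UN_disjoint[OF \<open>finite M\<close>])
    show "\<forall>e\<in>M. finite (\<Union>u\<in>e. ?S e u)"
      using edges(2) \<open>M \<subseteq> E\<close> \<open>finite E\<close> by (auto simp: finite_separating_orderings)
    show "\<forall>e\<in>M. \<forall>e'\<in>M. e \<noteq> e' \<longrightarrow> (\<Union>u\<in>e. ?S e u) \<inter> (\<Union>u\<in>e'. ?S e' u) = {}"
    proof (intro ballI impI)
      fix e e' assume "e \<in> M" "e' \<in> M" "e \<noteq> e'"
      then have "?S e u \<inter> ?S e' u' = {}" for u u'
        by (intro separating_orderings_disjoint) auto
      then show "(\<Union>u\<in>e. ?S e u) \<inter> (\<Union>u\<in>e'. ?S e' u) = {}"
        by blast
    qed
  qed
  then have "real (card {es \<in> permutations_of_set E. M \<subseteq> G_omega V es}) =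
      (\<Sum>e\<in>M. real (card (\<Union>u\<in>e. ?S e u)))"
    using orderings_with_matching_in_G_omega[OF _ M False] edges(1) by simp
  also have "\<dots> = (\<Sum>e\<in>M. fact (card E) * (2 / (n * ((n + d - 1) choose n))
                                        - 1 / (n * ((n + 2 * d - 2) choose n))))"
    using card_separating_orderings_matching_edge[OF G(1,4,3) M] \<open>card M = n\<close> by simp
  also have "\<dots> = fact (card E) * (2 / ((n + d - 1) choose n) - 1 / ((n + 2 * d - 2) choose n))"
    using \<open>card M = n\<close> \<open>0 < n\<close> by (simp add: field_simps)
  finally show ?thesis .
qed

lemma expectation_fraction_card_filter:
  assumes "finite S" "S \<noteq> {}" "finite A" "A \<noteq> {}"
    and "\<And>a. a \<in> A \<Longrightarrow> real (card {s \<in> S. R a s}) = c"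
  shows "measure_pmf.expectation (pmf_of_set S) (\<lambda>s. real (card {a \<in> A. R a s}) / real (card A))
    = c / real (card S)"
proof -
  have "(\<Sum>s\<in>S. card {a \<in> A. R a s}) = (\<Sum>a\<in>A. card {s \<in> S. R a s})"
    using sum.swap_restrict[of S A "\<lambda>_ _. 1::nat" "\<lambda>s a. R a s"] assms(1,3) by simp
  then have "(\<Sum>s\<in>S. real (card {a \<in> A. R a s})) = (\<Sum>a\<in>A. real (card {s \<in> S. R a s}))"
    unfolding of_nat_sum[symmetric] by (rule arg_cong)
  also have "\<dots> = (\<Sum>a\<in>A. c)"
    using assms(5) by (rule sum.cong[OF refl])
  also have "\<dots> = real (card A) * c"
    by simp
  finally show ?thesis
    using assms(1-4) by (simp add: integral_pmf_of_set sum_divide_distrib[symmetric])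
qed

theorem corollary2:
  fixes V :: "'a set" and E :: "'a set set" and n d :: nat
  assumes "simple_graph V E"
    and "card V = 2 * n"
    and "d \<ge> 1"
    and "regular V E d"
    and "perfect_matchings V E \<noteq> {}"
  shows "measure_pmf.expectation (pmf_of_set (edge_orderings E))
           (\<lambda>es. real (card (perfect_matchings V (G_omega V es)))
                 / real (card (perfect_matchings V E)))
         = 2 / real ((n + d - 1) choose n) - 1 / real ((n + 2 * d - 2) choose n)"
proof -
  let ?S = "permutations_of_set E" and ?PM = "perfect_matchings V E"
  let ?p = "2 / real ((n + d - 1) choose n) - 1 / real ((n + 2 * d - 2) choose n)"
  have "finite E"
    using assms(1) by (rule simple_graph_finite_edges)
  have orderings: "edge_orderings E = ?S"
    unfolding edge_orderings_def permutations_of_set_def by auto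
  have "perfect_matchings V (G_omega V es) = {M \<in> ?PM. M \<subseteq> G_omega V es}" if "es \<in> ?S" for es
    using G_omega_subset[of V es] that perfect_matching_subgraph_iff[of "G_omega V es" E V]
    unfolding perfect_matchings_def permutations_of_set_def by auto
  then have "measure_pmf.expectation (pmf_of_set ?S)
      (\<lambda>es. real (card (perfect_matchings V (G_omega V es))) / real (card ?PM)) =
    measure_pmf.expectation (pmf_of_set ?S)
      (\<lambda>es. real (card {M \<in> ?PM. M \<subseteq> G_omega V es}) / real (card ?PM))"
    using \<open>finite E\<close> by (simp add: integral_pmf_of_set)
  also have "\<dots> = fact (card E) * ?p / real (card ?S)"
  proof (rule expectation_fraction_card_filter)
    show "real (card {es \<in> ?S. M \<subseteq> G_omega V es}) = fact (card E) * ?p" if "M \<in> ?PM" for M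
      using card_orderings_with_matching_in_G_omega[OF assms(1-4)] that
      by (simp add: perfect_matchings_def)
  qed (use \<open>finite E\<close> finite_perfect_matchings assms(5) in auto)
  also have "\<dots> = ?p"
    using \<open>finite E\<close> by simp
  finally show ?thesis
    unfolding orderings .
qed

end
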